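(* For every $\gamma>0$, the matrix $\gamma 1$ is the unique strictly positive fixed point of the noncommutative Ricci flow having trace $n\gamma$; that is, if $c\in M_n$ is strictly positive with $\triangle\log c=0$ and $\tau(c)=n\gamma$, then $c=\gamma 1$.
   Context: Let $n\ge 2$, let $m\in\{1,\dots,n-1\}$ be relatively prime to $n$, and set $q=e^{2\pi i m/n}$. Let $M_n$ be the algebra of complex $n\times n$ matrices with identity $1$. Let $u=\mathrm{diag}(1,q,\dots,q^{n-1})$ and let $v$ be the cyclic shift matrix with $v_{j,j+1}=1$ for $j=1,\dots,n-1$, $v_{n,1}=1$, other entries $0$. Let $x,y$ be any Hermitian matrices with $u=e^{\frac{2\pi i}{n}x}$ and $v=e^{\frac{2\pi i}{n}y}$. Define $\delta_1(a)=[y,a]$, $\delta_2(a)=-[x,a]$ and $\triangle=\delta_1^2+\delta_2^2$ on $M_n$. $\tau$ is the usual trace; $\log$ of a strictly positive matrix is defined by functional calculus. The noncommutative Ricci flow is $\frac{d}{dt}c(t)=-\triangle\log c(t)$. *)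

theory Defs
  imports Complex_Main "Jordan_Normal_Form.Schur_Decomposition"
begin

text \<open>Complex n x n matrices are Jordan_Normal_Form matrices in carrier_mat n n.
  Indices are 0-based: row/column j corresponds to j+1 in the paper.\<close>

definition cmat_trace :: "complex mat \<Rightarrow> complex" where
  "cmat_trace A = (\<Sum>i<dim_row A. A $$ (i, i))"

definition hermitian_mat :: "nat \<Rightarrow> complex mat \<Rightarrow> bool" where
  "hermitian_mat n A \<longleftrightarrow> A \<in> carrier_mat n n \<and> mat_adjoint A = A"

definition unitary_mat :: "nat \<Rightarrow> complex mat \<Rightarrow> bool" where
  "unitary_mat n U \<longleftrightarrow> U \<in> carrier_mat n n \<and> mat_adjoint U * U = 1\<^sub>m n"

definition funcalc :: "nat \<Rightarrow> (real \<Rightarrow> complex) \<Rightarrow> complex mat \<Rightarrow> complex mat" where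
  "funcalc n f A = (THE B. \<exists>U (d :: nat \<Rightarrow> real). unitary_mat n U \<and>
      A = U * mat_diag n (\<lambda>i. complex_of_real (d i)) * mat_adjoint U \<and>
      B = U * mat_diag n (\<lambda>i. f (d i)) * mat_adjoint U)"

definition strictly_positive :: "nat \<Rightarrow> complex mat \<Rightarrow> bool" where
  "strictly_positive n c \<longleftrightarrow> hermitian_mat n c \<and>
     (\<forall>w \<in> carrier_vec n. w \<noteq> 0\<^sub>v n \<longrightarrow> 0 < Re ((c *\<^sub>v w) \<bullet>c w))"

definition mat_log :: "nat \<Rightarrow> complex mat \<Rightarrow> complex mat" where
  "mat_log n c = funcalc n (\<lambda>t. complex_of_real (ln t)) c"

definition clock_mat :: "nat \<Rightarrow> complex \<Rightarrow> complex mat" where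
  "clock_mat n q = mat_diag n (\<lambda>j. q ^ j)"

definition shift_mat :: "nat \<Rightarrow> complex mat" where
  "shift_mat n = mat n n (\<lambda>(i, j). if j = (i + 1) mod n then 1 else 0)"

definition delta1 :: "complex mat \<Rightarrow> complex mat \<Rightarrow> complex mat" where
  "delta1 y a = y * a - a * y"

definition delta2 :: "complex mat \<Rightarrow> complex mat \<Rightarrow> complex mat" where
  "delta2 x a = - (x * a - a * x)"

definition laplacian :: "complex mat \<Rightarrow> complex mat \<Rightarrow> complex mat \<Rightarrow> complex mat" where
  "laplacian x y a = delta1 y (delta1 y a) + delta2 x (delta2 x a)"

end

theory Submission
  imports Defs
begin

text \<open>Since \<open>h = log c\<close> is Hermitian, pairing \<open>\<triangle>h = 0\<close> with \<open>h\<close> gives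
  \<open>\<parallel>[y, h]\<parallel>\<^sup>2 + \<parallel>[x, h]\<parallel>\<^sup>2 = 0\<close>, so \<open>h\<close> commutes with \<open>x\<close> and \<open>y\<close> and hence
  with \<open>u = exp (2\<pi>i x / n)\<close> and \<open>v = exp (2\<pi>i y / n)\<close>. As \<open>m\<close> is coprime to \<open>n\<close>,
  the diagonal entries \<open>q\<^sup>j\<close> of \<open>u\<close> are distinct, so \<open>h\<close> is diagonal, and commuting
  with the cyclic shift \<open>v\<close> makes its diagonal constant. Thus \<open>log c\<close>, and with it \<open>c\<close>,
  is a multiple of the identity, and the trace condition identifies the multiple as \<open>\<gamma>\<close>.

  The functional calculus is defined by a definite description, so it only has content
  once every Hermitian matrix is known to be unitarily diagonalisable; this spectral
  theorem follows by the usual deflation along an eigenvector.\<close>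

lemma mat_adjoint_dim [simp]:
  "dim_row (mat_adjoint A) = dim_col A" "dim_col (mat_adjoint A) = dim_row A"
  unfolding mat_adjoint_def by (auto simp: mat_of_rows_def)

lemma index_mat_adjoint [simp]:
  "i < dim_col A \<Longrightarrow> j < dim_row A \<Longrightarrow> mat_adjoint A $$ (i, j) = cnj (A $$ (j, i))"
  unfolding mat_adjoint_def by (auto simp: mat_of_rows_def conjugate_complex_def)

lemma mat_adjoint_carrier [simp]: "A \<in> carrier_mat n m \<Longrightarrow> mat_adjoint A \<in> carrier_mat m n"
  by (metis mat_adjoint_dim carrier_matD carrier_matI)

lemma mat_adjoint_adjoint [simp]: "mat_adjoint (mat_adjoint A) = (A :: complex mat)"
  by (rule eq_matI) auto

lemma mat_adjoint_mult:
  assumes "(A :: complex mat) \<in> carrier_mat n k" "B \<in> carrier_mat k m"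
  shows "mat_adjoint (A * B) = mat_adjoint B * mat_adjoint A"
  using assms by (intro eq_matI) (auto simp: scalar_prod_def ac_simps)

lemma mat_adjoint_minus:
  assumes "(A :: complex mat) \<in> carrier_mat n k" "B \<in> carrier_mat n k"
  shows "mat_adjoint (A - B) = mat_adjoint A - mat_adjoint B"
  using assms by (intro eq_matI) auto

lemma mat_diag_dims [simp]: "dim_row (mat_diag n f) = n" "dim_col (mat_diag n f) = n"
  unfolding mat_diag_def by auto

abbreviation real_diag_mat :: "nat \<Rightarrow> (nat \<Rightarrow> real) \<Rightarrow> complex mat" where
  "real_diag_mat n d \<equiv> mat_diag n (\<lambda>i. complex_of_real (d i))"

lemma mat_adjoint_real_diag_mat [simp]: "mat_adjoint (real_diag_mat n d) = real_diag_mat n d"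
  by (rule eq_matI) (auto simp: mat_diag_def)

lemma index_conj_mat_diag:
  fixes U :: "complex mat"
  assumes U: "U \<in> carrier_mat n n" and i: "i < n" and j: "j < n"
  shows "(U * mat_diag n f * mat_adjoint U) $$ (i, j) = (\<Sum>k<n. U $$ (i, k) * f k * cnj (U $$ (j, k)))"
  unfolding mat_diag_mult_right[OF U] using U i j by (simp add: scalar_prod_def atLeast0LessThan)

lemma unitary_mat_carrier: "unitary_mat n U \<Longrightarrow> U \<in> carrier_mat n n"
  unfolding unitary_mat_def by auto

lemma unitary_adjoint_mult: "unitary_mat n U \<Longrightarrow> mat_adjoint U * U = 1\<^sub>m n"
  unfolding unitary_mat_def by auto

lemma unitary_mult_adjoint: "unitary_mat n U \<Longrightarrow> U * mat_adjoint U = 1\<^sub>m n"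
  using mat_mult_left_right_inverse[of "mat_adjoint U" n U] unfolding unitary_mat_def by auto

lemma unitary_adjoint_mult_cancel:
  assumes U: "unitary_mat n U" and X: "X \<in> carrier_mat n k"
  shows "mat_adjoint U * (U * X) = X"
proof -
  have "mat_adjoint U * (U * X) = (mat_adjoint U * U) * X"
    using unitary_mat_carrier[OF U] X by (simp add: assoc_mult_mat[of _ n n _ n _ k])
  then show ?thesis using unitary_adjoint_mult[OF U] X by simp
qed

lemma unitary_mult_adjoint_cancel:
  assumes U: "unitary_mat n U" and X: "X \<in> carrier_mat n k"
  shows "U * (mat_adjoint U * X) = X"
proof -
  have "U * (mat_adjoint U * X) = (U * mat_adjoint U) * X"
    using unitary_mat_carrier[OF U] X by (simp add: assoc_mult_mat[of _ n n _ n _ k])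
  then show ?thesis using unitary_mult_adjoint[OF U] X by simp
qed

lemma unitary_mat_mult:
  assumes U: "unitary_mat n U" and V: "unitary_mat n V"
  shows "unitary_mat n (U * V)"
proof -
  have Uc: "U \<in> carrier_mat n n" and Vc: "V \<in> carrier_mat n n"
    using U V by (auto simp: unitary_mat_carrier)
  have "mat_adjoint (U * V) * (U * V) = mat_adjoint V * (mat_adjoint U * (U * V))"
    using Uc Vc by (simp add: mat_adjoint_mult[of _ n n _ n] assoc_mult_mat[of _ n n _ n _ n])
  also have "\<dots> = 1\<^sub>m n"
    using unitary_adjoint_mult_cancel[OF U Vc] unitary_adjoint_mult[OF V] by simp
  finally show ?thesis unfolding unitary_mat_def using Uc Vc by auto
qed

lemma unitary_cols_orthonormal:
  assumes U: "unitary_mat n U" and p: "p < n" and q: "q < n"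
  shows "(\<Sum>k<n. cnj (U $$ (k, p)) * U $$ (k, q)) = (if p = q then 1 else 0)"
proof -
  have "(\<Sum>k<n. cnj (U $$ (k, p)) * U $$ (k, q)) = (mat_adjoint U * U) $$ (p, q)"
    using unitary_mat_carrier[OF U] p q by (simp add: scalar_prod_def atLeast0LessThan)
  then show ?thesis using unitary_adjoint_mult[OF U] p q by simp
qed

lemma unitary_conj_smult_one:
  assumes U: "unitary_mat n U"
  shows "mat_adjoint U * (a \<cdot>\<^sub>m 1\<^sub>m n) * U = a \<cdot>\<^sub>m 1\<^sub>m n"
    and "U * (a \<cdot>\<^sub>m 1\<^sub>m n) * mat_adjoint U = a \<cdot>\<^sub>m 1\<^sub>m n"
proof -
  have Uc: "U \<in> carrier_mat n n" using U by (rule unitary_mat_carrier)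
  have "mat_adjoint U * (a \<cdot>\<^sub>m 1\<^sub>m n) * U = a \<cdot>\<^sub>m (mat_adjoint U * U)"
    using Uc by (simp add: mult_smult_distrib[of _ n n _ n] mult_smult_assoc_mat[of _ n n _ n])
  then show "mat_adjoint U * (a \<cdot>\<^sub>m 1\<^sub>m n) * U = a \<cdot>\<^sub>m 1\<^sub>m n"
    using unitary_adjoint_mult[OF U] by simp
  have "U * (a \<cdot>\<^sub>m 1\<^sub>m n) * mat_adjoint U = a \<cdot>\<^sub>m (U * mat_adjoint U)"
    using Uc by (simp add: mult_smult_distrib[of _ n n _ n] mult_smult_assoc_mat[of _ n n _ n])
  then show "U * (a \<cdot>\<^sub>m 1\<^sub>m n) * mat_adjoint U = a \<cdot>\<^sub>m 1\<^sub>m n"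
    using unitary_mult_adjoint[OF U] by simp
qed

lemma cscalar_prod_sum:
  fixes v w :: "complex vec"
  assumes "v \<in> carrier_vec n" "w \<in> carrier_vec n"
  shows "v \<bullet>c w = (\<Sum>k<n. v $ k * cnj (w $ k))"
  using assms by (simp add: scalar_prod_def atLeast0LessThan conjugate_complex_def)

section \<open>The spectral theorem for Hermitian matrices\<close>

lemma unitary_of_corthogonal:
  fixes ws :: "complex vec list"
  assumes wsc: "set ws \<subseteq> carrier_vec n" and orth: "corthogonal ws" and len: "length ws = n"
  shows "\<exists>W. unitary_mat n W \<and> (\<forall>q<n. \<exists>a. col W q = a \<cdot>\<^sub>v ws ! q)"
proof -
  define r where "r q = sqrt (\<Sum>k<n. (cmod (ws ! q $ k))\<^sup>2)" for q
  have wq: "ws ! q \<in> carrier_vec n" if "q < n" for q using wsc len that by auto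
  have norm_sq: "ws ! q \<bullet>c ws ! q = complex_of_real ((r q)\<^sup>2)" if q: "q < n" for q
  proof -
    have "ws ! q \<bullet>c ws ! q = (\<Sum>k<n. complex_of_real ((cmod (ws ! q $ k))\<^sup>2))"
      unfolding cscalar_prod_sum[OF wq[OF q] wq[OF q]]
      by (intro sum.cong refl) (metis complex_norm_square)
    also have "\<dots> = complex_of_real ((r q)\<^sup>2)"
      unfolding r_def by (subst real_sqrt_pow2) (auto intro: sum_nonneg)
    finally show ?thesis .
  qed
  have r_nonzero: "r q \<noteq> 0" if q: "q < n" for q
    using norm_sq[OF q] corthogonalD[OF orth, of q q] q len by auto
  define W where "W = mat n n (\<lambda>(p, q). ws ! q $ p / complex_of_real (r q))"
  have Wc: "W \<in> carrier_mat n n" unfolding W_def by auto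
  have "mat_adjoint W * W = 1\<^sub>m n"
  proof (rule eq_matI)
    fix p q assume "p < dim_row (1\<^sub>m n :: complex mat)" "q < dim_col (1\<^sub>m n :: complex mat)"
    then have p: "p < n" and q: "q < n" by auto
    have "(mat_adjoint W * W) $$ (p, q)
        = (\<Sum>k<n. ws ! q $ k * cnj (ws ! p $ k) / (complex_of_real (r p) * complex_of_real (r q)))"
      using p q Wc by (simp add: scalar_prod_def atLeast0LessThan W_def mult.commute)
    also have "\<dots> = (ws ! q \<bullet>c ws ! p) / (complex_of_real (r p) * complex_of_real (r q))"
      unfolding cscalar_prod_sum[OF wq[OF q] wq[OF p]] by (simp add: sum_divide_distrib)
    also have "\<dots> = 1\<^sub>m n $$ (p, q)"
      using norm_sq[OF q] r_nonzero[OF q] corthogonalD[OF orth, of q p] p q len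
      by (cases "p = q") (auto simp: power2_eq_square)
    finally show "(mat_adjoint W * W) $$ (p, q) = 1\<^sub>m n $$ (p, q)" .
  qed (use Wc in auto)
  then have "unitary_mat n W" unfolding unitary_mat_def using Wc by auto
  moreover have "col W q = (1 / complex_of_real (r q)) \<cdot>\<^sub>v ws ! q" if "q < n" for q
    unfolding W_def using that wq[OF that] by (intro eq_vecI) auto
  ultimately show ?thesis by blast
qed

lemma exists_unitary_first_col:
  fixes v :: "complex vec"
  assumes v: "v \<in> carrier_vec n" and v0: "v \<noteq> 0\<^sub>v n"
  shows "\<exists>W a. unitary_mat n W \<and> col W 0 = a \<cdot>\<^sub>v v"
proof -
  interpret cof_vec_space n "TYPE(complex)" .
  define b where "b = basis_completion v"
  from basis_completion[OF v v0, folded b_def]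
  have dist: "distinct b" and indep: "\<not> lin_dep (set b)" and b: "set b \<subseteq> carrier_vec n"
    and hd_b: "hd b = v" and len: "length b = n" by auto
  have n: "n \<noteq> 0" using v v0 by (metis carrier_vecD eq_vecI index_zero_vec(2) less_nat_zero_code)
  from hd_b len n obtain vs where bv: "b = v # vs" by (cases b) auto
  define ws where "ws = gram_schmidt n b"
  from gram_schmidt_result[OF b dist indep refl, folded ws_def]
  have ws: "set ws \<subseteq> carrier_vec n" "corthogonal ws" and len_ws: "length ws = n"
    by (auto simp: len)
  have "hd ws = v" using gram_schmidt_hd[OF v, of vs] unfolding ws_def bv .
  then have ws0: "ws ! 0 = v" using n len_ws by (metis hd_conv_nth list.size(3))
  obtain W where "unitary_mat n W" and "\<forall>q<n. \<exists>a. col W q = a \<cdot>\<^sub>v ws ! q"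
    using unitary_of_corthogonal[OF ws len_ws] by blast
  then show ?thesis using n ws0 by auto
qed

lemma hermitian_unitary_conj:
  assumes A: "hermitian_mat n A" and W: "unitary_mat n W"
  shows "hermitian_mat n (mat_adjoint W * A * W)"
  using A unitary_mat_carrier[OF W] unfolding hermitian_mat_def
  by (auto simp: mat_adjoint_mult[of _ n n _ n] assoc_mult_mat[of _ n n _ n _ n])

lemma exists_eigenvector:
  fixes A :: "complex mat"
  assumes A: "A \<in> carrier_mat n n" and n: "0 < n"
  shows "\<exists>e v. v \<in> carrier_vec n \<and> v \<noteq> 0\<^sub>v n \<and> A *\<^sub>v v = e \<cdot>\<^sub>v v"
proof -
  obtain es where cp: "char_poly A = (\<Prod>a\<leftarrow>es. [:-a, 1:])" and "length es = n"
    using char_poly_factorized[OF A] by blast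
  with n obtain e es' where "es = e # es'" by (cases es) auto
  then have "eigenvalue A e" using eigenvalue_root_char_poly[OF A] cp by simp
  then show ?thesis unfolding eigenvalue_def eigenvector_def using A by auto
qed

lemma hermitian_deflation:
  assumes A: "hermitian_mat n A" and n: "0 < n"
  shows "\<exists>W e. unitary_mat n W \<and>
    (\<forall>i<n. (mat_adjoint W * A * W) $$ (i, 0) = (if i = 0 then complex_of_real e else 0))"
proof -
  have Ac: "A \<in> carrier_mat n n" using A unfolding hermitian_mat_def by auto
  obtain e v where v: "v \<in> carrier_vec n" "v \<noteq> 0\<^sub>v n" and Av: "A *\<^sub>v v = e \<cdot>\<^sub>v v"
    using exists_eigenvector[OF Ac n] by blast
  obtain W a where W: "unitary_mat n W" and W0: "col W 0 = a \<cdot>\<^sub>v v"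
    using exists_unitary_first_col[OF v] by blast
  have Wc: "W \<in> carrier_mat n n" using W by (rule unitary_mat_carrier)
  define A' where "A' = mat_adjoint W * A * W"
  have "col (A * W) 0 = A *\<^sub>v (a \<cdot>\<^sub>v v)" using col_mult2[OF Ac Wc n] W0 by simp
  also have "\<dots> = e \<cdot>\<^sub>v col W 0" using v Av W0 by (auto simp: mult_mat_vec[OF Ac] intro!: eq_vecI)
  finally have AW0: "col (A * W) 0 = e \<cdot>\<^sub>v col W 0" .
  have col0: "A' $$ (i, 0) = (if i = 0 then e else 0)" if i: "i < n" for i
  proof -
    have "A' $$ (i, 0) = row (mat_adjoint W) i \<bullet> col (A * W) 0"
      unfolding A'_def using Ac Wc i n by (simp add: assoc_mult_mat[of _ n n _ n _ n])
    also have "\<dots> = e * (mat_adjoint W * W) $$ (i, 0)" unfolding AW0 using Wc i n by simp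
    finally show ?thesis using unitary_adjoint_mult[OF W] i n by simp
  qed
  have "hermitian_mat n A'" unfolding A'_def by (rule hermitian_unitary_conj[OF A W])
  then have "A' $$ (0, 0) = mat_adjoint A' $$ (0, 0)" unfolding hermitian_mat_def by simp
  also have "\<dots> = cnj (A' $$ (0, 0))"
    by (rule index_mat_adjoint) (use \<open>hermitian_mat n A'\<close> n in \<open>auto simp: hermitian_mat_def\<close>)
  finally have "A' $$ (0, 0) = cnj (A' $$ (0, 0))" .
  then have "Im e = 0" using col0[OF n] by (simp add: complex_eq_iff)
  then have "e = complex_of_real (Re e)" by (simp add: complex_eq_iff)
  then have "\<forall>i<n. A' $$ (i, 0) = (if i = 0 then complex_of_real (Re e) else 0)"
    using col0 by simp
  with W show ?thesis unfolding A'_def by blast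
qed

definition lower_right_block :: "'a mat \<Rightarrow> 'a mat" where
  "lower_right_block A = mat (dim_row A - 1) (dim_col A - 1) (\<lambda>(i, j). A $$ (Suc i, Suc j))"

definition one_direct_sum :: "complex mat \<Rightarrow> complex mat" where
  "one_direct_sum U = mat (Suc (dim_row U)) (Suc (dim_col U))
     (\<lambda>(i, j). if i = 0 \<or> j = 0 then (if i = j then 1 else 0) else U $$ (i - 1, j - 1))"

lemma hermitian_lower_right_block:
  assumes A: "hermitian_mat (Suc n) A"
  shows "hermitian_mat n (lower_right_block A)"
proof -
  have Ac: "A \<in> carrier_mat (Suc n) (Suc n)" and "mat_adjoint A = A"
    using A unfolding hermitian_mat_def by auto
  then have "cnj (A $$ (Suc j, Suc i)) = A $$ (Suc i, Suc j)" if "i < n" "j < n" for i j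
    using that by (metis Suc_mono carrier_matD index_mat_adjoint)
  then show ?thesis
    using Ac unfolding hermitian_mat_def lower_right_block_def by (auto intro!: eq_matI)
qed

lemma one_direct_sum_carrier: "U \<in> carrier_mat n n \<Longrightarrow> one_direct_sum U \<in> carrier_mat (Suc n) (Suc n)"
  unfolding one_direct_sum_def by auto

lemma unitary_one_direct_sum:
  assumes U: "unitary_mat n U"
  shows "unitary_mat (Suc n) (one_direct_sum U)"
proof -
  have Uc: "U \<in> carrier_mat n n" using U by (rule unitary_mat_carrier)
  define B where "B = one_direct_sum U"
  have Bc: "B \<in> carrier_mat (Suc n) (Suc n)" unfolding B_def by (rule one_direct_sum_carrier[OF Uc])
  have "mat_adjoint B * B = 1\<^sub>m (Suc n)"
  proof (rule eq_matI)
    fix p q assume "p < dim_row (1\<^sub>m (Suc n) :: complex mat)" "q < dim_col (1\<^sub>m (Suc n) :: complex mat)"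
    then have p: "p < Suc n" and q: "q < Suc n" by auto
    have "(mat_adjoint B * B) $$ (p, q)
        = cnj (B $$ (0, p)) * B $$ (0, q) + (\<Sum>k<n. cnj (B $$ (Suc k, p)) * B $$ (Suc k, q))"
      using p q Bc by (simp add: scalar_prod_def atLeast0LessThan sum.lessThan_Suc_shift del: sum.lessThan_Suc)
    also have "\<dots> = 1\<^sub>m (Suc n) $$ (p, q)"
    proof (cases "p = 0 \<or> q = 0")
      case True
      then show ?thesis using p q Uc unfolding B_def one_direct_sum_def by auto
    next
      case False
      then obtain p' q' where pq: "p = Suc p'" "q = Suc q'" by (metis not0_implies_Suc)
      have "(\<Sum>k<n. cnj (B $$ (Suc k, p)) * B $$ (Suc k, q)) = (\<Sum>k<n. cnj (U $$ (k, p')) * U $$ (k, q'))"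
        using p q pq Uc unfolding B_def one_direct_sum_def by (intro sum.cong refl) simp
      then show ?thesis
        using unitary_cols_orthonormal[OF U, of p' q'] p q pq Uc
        unfolding B_def one_direct_sum_def by simp
    qed
    finally show "(mat_adjoint B * B) $$ (p, q) = 1\<^sub>m (Suc n) $$ (p, q)" .
  qed (use Bc in auto)
  then show ?thesis using Bc unfolding unitary_mat_def B_def by auto
qed

lemma index_one_direct_sum_conj:
  assumes U: "U \<in> carrier_mat n n" and p: "p < Suc n" and q: "q < Suc n"
  defines "B \<equiv> one_direct_sum U"
  shows "(B * real_diag_mat (Suc n) (case_nat e d) * mat_adjoint B) $$ (p, q) =
    (if p = 0 \<or> q = 0 then (if p = q then complex_of_real e else 0)
     else (U * real_diag_mat n d * mat_adjoint U) $$ (p - 1, q - 1))"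
proof -
  have Bc: "B \<in> carrier_mat (Suc n) (Suc n)" unfolding B_def by (rule one_direct_sum_carrier[OF U])
  have "(B * real_diag_mat (Suc n) (case_nat e d) * mat_adjoint B) $$ (p, q) =
      B $$ (p, 0) * complex_of_real e * cnj (B $$ (q, 0)) +
      (\<Sum>k<n. B $$ (p, Suc k) * complex_of_real (d k) * cnj (B $$ (q, Suc k)))"
    unfolding index_conj_mat_diag[OF Bc p q] by (simp add: sum.lessThan_Suc_shift del: sum.lessThan_Suc)
  also have "\<dots> = (if p = 0 \<or> q = 0 then (if p = q then complex_of_real e else 0)
     else (U * real_diag_mat n d * mat_adjoint U) $$ (p - 1, q - 1))"
  proof (cases "p = 0 \<or> q = 0")
    case True
    then show ?thesis using p q U unfolding B_def one_direct_sum_def by auto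
  next
    case False
    then obtain p' q' where pq: "p = Suc p'" "q = Suc q'" by (metis not0_implies_Suc)
    then show ?thesis
      using p q U index_conj_mat_diag[OF U, of p' q'] unfolding B_def one_direct_sum_def by auto
  qed
  finally show ?thesis .
qed

lemma hermitian_eq_one_direct_sum_conj:
  assumes A: "hermitian_mat (Suc n) A"
    and col0: "\<forall>i<Suc n. A $$ (i, 0) = (if i = 0 then complex_of_real e else 0)"
    and V: "V \<in> carrier_mat n n"
    and block: "lower_right_block A = V * real_diag_mat n d * mat_adjoint V"
  shows "A = one_direct_sum V * real_diag_mat (Suc n) (case_nat e d) * mat_adjoint (one_direct_sum V)"
proof (rule eq_matI)
  have Ac: "A \<in> carrier_mat (Suc n) (Suc n)" using A unfolding hermitian_mat_def by auto
  let ?D = "one_direct_sum V * real_diag_mat (Suc n) (case_nat e d) * mat_adjoint (one_direct_sum V)"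
  fix p q assume "p < dim_row ?D" "q < dim_col ?D"
  then have p: "p < Suc n" and q: "q < Suc n" using one_direct_sum_carrier[OF V] by auto
  have row0: "A $$ (0, j) = cnj (A $$ (j, 0))" if "j < Suc n" for j
    using A that unfolding hermitian_mat_def by (metis carrier_matD index_mat_adjoint zero_less_Suc)
  have "(V * real_diag_mat n d * mat_adjoint V) $$ (p - 1, q - 1) = A $$ (p, q)" if "p \<noteq> 0" "q \<noteq> 0"
    using that p q Ac unfolding block[symmetric] lower_right_block_def by auto
  then show "A $$ (p, q) = ?D $$ (p, q)"
    using col0 row0 p q unfolding index_one_direct_sum_conj[OF V p q] by auto
qed (use one_direct_sum_carrier[OF V] A in \<open>auto simp: hermitian_mat_def\<close>)

theorem hermitian_spectral:
  "hermitian_mat n A \<Longrightarrow> \<exists>U d. unitary_mat n U \<and> A = U * real_diag_mat n d * mat_adjoint U"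
proof (induction n arbitrary: A)
  case 0
  then have "A = 1\<^sub>m 0 * real_diag_mat 0 (\<lambda>_. 0) * mat_adjoint (1\<^sub>m 0)"
    unfolding hermitian_mat_def by (intro eq_matI) auto
  moreover have "unitary_mat 0 (1\<^sub>m 0)" unfolding unitary_mat_def by auto
  ultimately show ?case by (intro exI[of _ "1\<^sub>m 0"] exI[of _ "\<lambda>_. 0"]) auto
next
  case (Suc n A)
  note sq = assoc_mult_mat[of _ "Suc n" "Suc n" _ "Suc n" _ "Suc n"] mult_carrier_mat[of _ "Suc n" "Suc n"]
  have Ac: "A \<in> carrier_mat (Suc n) (Suc n)" using Suc.prems unfolding hermitian_mat_def by auto
  obtain W e where W: "unitary_mat (Suc n) W"
    and col0: "\<forall>i<Suc n. (mat_adjoint W * A * W) $$ (i, 0) = (if i = 0 then complex_of_real e else 0)"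
    using hermitian_deflation[OF Suc.prems] by blast
  have Wc: "W \<in> carrier_mat (Suc n) (Suc n)" using W by (rule unitary_mat_carrier)
  define A' where "A' = mat_adjoint W * A * W"
  have A': "hermitian_mat (Suc n) A'" unfolding A'_def by (rule hermitian_unitary_conj[OF Suc.prems W])
  obtain V d where V: "unitary_mat n V"
    and V_diag: "lower_right_block A' = V * real_diag_mat n d * mat_adjoint V"
    using Suc.IH[OF hermitian_lower_right_block[OF A']] by blast
  define B where "B = one_direct_sum V"
  have B: "unitary_mat (Suc n) B" unfolding B_def by (rule unitary_one_direct_sum[OF V])
  have Bc: "B \<in> carrier_mat (Suc n) (Suc n)" using B by (rule unitary_mat_carrier)
  have "A = W * A' * mat_adjoint W"
    unfolding A'_def using Ac Wc
    by (simp add: sq unitary_mult_adjoint_cancel[OF W, of _ "Suc n"] unitary_mult_adjoint[OF W])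
  also have "A' = B * real_diag_mat (Suc n) (case_nat e d) * mat_adjoint B"
    unfolding B_def using hermitian_eq_one_direct_sum_conj[OF A' _ unitary_mat_carrier[OF V] V_diag] col0
    unfolding A'_def by blast
  finally have "A = (W * B) * real_diag_mat (Suc n) (case_nat e d) * mat_adjoint (W * B)"
    using Wc Bc by (simp add: sq mat_adjoint_mult[of _ "Suc n" "Suc n" _ "Suc n"])
  then show ?case using unitary_mat_mult[OF W B] by blast
qed

section \<open>Functional calculus\<close>

lemma intertwine_mat_diag_entry:
  fixes W :: "complex mat"
  assumes W: "W \<in> carrier_mat n n" and intertw: "W * mat_diag n a = mat_diag n b * W"
    and i: "i < n" and j: "j < n" and neq: "a j \<noteq> b i"
  shows "W $$ (i, j) = 0"
proof -
  from arg_cong[OF intertw, of "\<lambda>M. M $$ (i, j)"] have "W $$ (i, j) * (a j - b i) = 0"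
    using i j W unfolding mat_diag_mult_left[OF W] mat_diag_mult_right[OF W] by (simp add: algebra_simps)
  then show ?thesis using neq by simp
qed

lemma mat_diag_intertwine:
  fixes W :: "complex mat"
  assumes W: "W \<in> carrier_mat n n" and intertw: "W * mat_diag n a = mat_diag n b * W"
  shows "W * mat_diag n (\<lambda>i. f (a i)) = mat_diag n (\<lambda>i. f (b i)) * W"
proof (rule eq_matI)
  fix i j assume "i < dim_row (mat_diag n (\<lambda>i. f (b i)) * W)" "j < dim_col (mat_diag n (\<lambda>i. f (b i)) * W)"
  then have i: "i < n" and j: "j < n" using W by auto
  then have "W $$ (i, j) = 0 \<or> a j = b i" using intertwine_mat_diag_entry[OF W intertw] by blast
  then show "(W * mat_diag n (\<lambda>i. f (a i))) $$ (i, j) = (mat_diag n (\<lambda>i. f (b i)) * W) $$ (i, j)"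
    using i j W unfolding mat_diag_mult_left[OF W] mat_diag_mult_right[OF W] by auto
qed (use W in auto)

lemma funcalc_well_defined:
  assumes U: "unitary_mat n U" and V: "unitary_mat n V"
    and eq: "U * real_diag_mat n d * mat_adjoint U = V * real_diag_mat n e * mat_adjoint V"
  shows "U * mat_diag n (\<lambda>i. f (d i)) * mat_adjoint U = V * mat_diag n (\<lambda>i. f (e i)) * mat_adjoint V"
proof -
  have Uc: "U \<in> carrier_mat n n" and Vc: "V \<in> carrier_mat n n" using U V by (auto simp: unitary_mat_carrier)
  note sq = assoc_mult_mat[of _ n n _ n _ n] mult_carrier_mat[of _ n n _ n]
  note c = Uc Vc mat_adjoint_carrier[OF Uc] mat_adjoint_carrier[OF Vc]
  define W where "W = mat_adjoint V * U"
  have Wc: "W \<in> carrier_mat n n" unfolding W_def using c by auto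
  have "W * real_diag_mat n d = mat_adjoint V * (U * real_diag_mat n d * mat_adjoint U) * U"
    unfolding W_def using c unitary_adjoint_mult_cancel[OF U, of _ n] unitary_adjoint_mult[OF U]
    by (simp add: sq)
  also have "\<dots> = real_diag_mat n e * W"
    unfolding eq W_def using c unitary_adjoint_mult_cancel[OF V, of _ n] unitary_adjoint_mult[OF V]
    by (simp add: sq)
  finally have "W * mat_diag n (\<lambda>i. f (Re (complex_of_real (d i)))) =
      mat_diag n (\<lambda>i. f (Re (complex_of_real (e i)))) * W"
    by (rule mat_diag_intertwine[OF Wc])
  then have intertw: "W * mat_diag n (\<lambda>i. f (d i)) = mat_diag n (\<lambda>i. f (e i)) * W" by simp
  have "U * mat_diag n (\<lambda>i. f (d i)) * mat_adjoint U
      = V * (W * mat_diag n (\<lambda>i. f (d i))) * mat_adjoint U"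
    unfolding W_def using c unitary_mult_adjoint_cancel[OF V, of _ n] by (simp add: sq)
  also have "\<dots> = V * mat_diag n (\<lambda>i. f (e i)) * mat_adjoint V"
    unfolding intertw unfolding W_def using c unitary_mult_adjoint_cancel[OF U, of _ n] unitary_mult_adjoint[OF U]
    by (simp add: sq)
  finally show ?thesis .
qed

lemma funcalc_eq:
  assumes U: "unitary_mat n U" and A: "A = U * real_diag_mat n d * mat_adjoint U"
  shows "funcalc n f A = U * mat_diag n (\<lambda>i. f (d i)) * mat_adjoint U"
  unfolding funcalc_def
proof (rule the_equality)
  show "\<exists>U' d'. unitary_mat n U' \<and> A = U' * real_diag_mat n d' * mat_adjoint U' \<and>
      U * mat_diag n (\<lambda>i. f (d i)) * mat_adjoint U = U' * mat_diag n (\<lambda>i. f (d' i)) * mat_adjoint U'"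
    using U A by blast
next
  fix B assume "\<exists>V e. unitary_mat n V \<and> A = V * real_diag_mat n e * mat_adjoint V \<and>
      B = V * mat_diag n (\<lambda>i. f (e i)) * mat_adjoint V"
  then obtain V e where V: "unitary_mat n V" and A_eq: "A = V * real_diag_mat n e * mat_adjoint V"
    and B: "B = V * mat_diag n (\<lambda>i. f (e i)) * mat_adjoint V" by blast
  show "B = U * mat_diag n (\<lambda>i. f (d i)) * mat_adjoint U"
    unfolding B by (rule funcalc_well_defined[OF V U trans[OF A_eq[symmetric] A]])
qed

lemma funcalc_hermitian_eq:
  assumes "hermitian_mat n A"
  shows "\<exists>U d. unitary_mat n U \<and> A = U * real_diag_mat n d * mat_adjoint U \<and>
    funcalc n f A = U * mat_diag n (\<lambda>i. f (d i)) * mat_adjoint U"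
  using hermitian_spectral[OF assms] funcalc_eq by blast

lemma commute_funcalc:
  assumes A: "hermitian_mat n A" and h: "h \<in> carrier_mat n n" and comm: "h * A = A * h"
  shows "h * funcalc n f A = funcalc n f A * h"
proof -
  obtain U d where U: "unitary_mat n U" and A_eq: "A = U * real_diag_mat n d * mat_adjoint U"
    and fA: "funcalc n f A = U * mat_diag n (\<lambda>i. f (d i)) * mat_adjoint U"
    using funcalc_hermitian_eq[OF A] by blast
  have Uc: "U \<in> carrier_mat n n" using U by (rule unitary_mat_carrier)
  note c = Uc mat_adjoint_carrier[OF Uc] h
  note sq = assoc_mult_mat[of _ n n _ n _ n] mult_carrier_mat[of _ n n _ n]
    unitary_adjoint_mult_cancel[OF U, of _ n] unitary_adjoint_mult[OF U]
    unitary_mult_adjoint_cancel[OF U, of _ n] unitary_mult_adjoint[OF U]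
  define k where "k = mat_adjoint U * h * U"
  have kc: "k \<in> carrier_mat n n" unfolding k_def using c by auto
  have "k * real_diag_mat n d = mat_adjoint U * (h * A) * U"
    unfolding k_def A_eq using c by (simp add: sq)
  also have "\<dots> = real_diag_mat n d * k"
    unfolding comm unfolding k_def A_eq using c by (simp add: sq)
  finally have "k * mat_diag n (\<lambda>i. f (Re (complex_of_real (d i)))) =
      mat_diag n (\<lambda>i. f (Re (complex_of_real (d i)))) * k"
    by (rule mat_diag_intertwine[OF kc])
  then have intertw: "k * mat_diag n (\<lambda>i. f (d i)) = mat_diag n (\<lambda>i. f (d i)) * k" by simp
  have "h * funcalc n f A = U * (k * mat_diag n (\<lambda>i. f (d i))) * mat_adjoint U"
    unfolding fA k_def using c by (simp add: sq)
  also have "\<dots> = funcalc n f A * h"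
    unfolding intertw unfolding fA k_def using c by (simp add: sq)
  finally show ?thesis .
qed

lemma hermitian_funcalc_real:
  assumes A: "hermitian_mat n A"
  shows "hermitian_mat n (funcalc n (\<lambda>t. complex_of_real (g t)) A)"
proof -
  obtain U d where U: "unitary_mat n U"
    and gA: "funcalc n (\<lambda>t. complex_of_real (g t)) A = U * real_diag_mat n (\<lambda>i. g (d i)) * mat_adjoint U"
    using funcalc_hermitian_eq[OF A] by blast
  have Uc: "U \<in> carrier_mat n n" using U by (rule unitary_mat_carrier)
  then show ?thesis
    unfolding hermitian_mat_def gA
    by (simp add: mat_adjoint_mult[of _ n n _ n] assoc_mult_mat[of _ n n _ n _ n] mult_carrier_mat[of _ n n _ n])
qed

lemma strictly_positive_eigenvalues_pos:
  assumes pos: "strictly_positive n c" and U: "unitary_mat n U"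
    and c_eq: "c = U * real_diag_mat n d * mat_adjoint U" and i: "i < n"
  shows "0 < d i"
proof -
  have Uc: "U \<in> carrier_mat n n" using U by (rule unitary_mat_carrier)
  have cc: "c \<in> carrier_mat n n" using pos unfolding strictly_positive_def hermitian_mat_def by auto
  define w where "w = col U i"
  have wc: "w \<in> carrier_vec n" unfolding w_def using Uc by auto
  have "c * U = U * real_diag_mat n d"
    unfolding c_eq using Uc
    by (simp add: assoc_mult_mat[of _ n n _ n _ n] mult_carrier_mat[of _ n n _ n] unitary_adjoint_mult[OF U])
  then have "c *\<^sub>v w = col (U * real_diag_mat n d) i"
    unfolding w_def using col_mult2[OF cc Uc i] by simp
  also have "\<dots> = complex_of_real (d i) \<cdot>\<^sub>v w"
    unfolding w_def mat_diag_mult_right[OF Uc] using Uc i by (intro eq_vecI) auto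
  finally have cw: "c *\<^sub>v w = complex_of_real (d i) \<cdot>\<^sub>v w" .
  have "w \<bullet>c w = (\<Sum>k<n. cnj (U $$ (k, i)) * U $$ (k, i))"
    unfolding cscalar_prod_sum[OF wc wc] unfolding w_def using Uc i by (intro sum.cong refl) (auto simp: mult.commute)
  then have ww: "w \<bullet>c w = 1" using unitary_cols_orthonormal[OF U i i] by simp
  then have "w \<noteq> 0\<^sub>v n" by auto
  then have "0 < Re ((c *\<^sub>v w) \<bullet>c w)" using pos wc unfolding strictly_positive_def by auto
  also have "(c *\<^sub>v w) \<bullet>c w = complex_of_real (d i) * (w \<bullet>c w)"
    unfolding cw using wc by (simp add: conjugate_complex_def)
  finally show ?thesis using ww by simp
qed

section \<open>The kernel of the Laplacian\<close>

lemma trace_add: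
  "A \<in> carrier_mat n n \<Longrightarrow> B \<in> carrier_mat n n \<Longrightarrow> cmat_trace (A + B) = cmat_trace A + cmat_trace B"
  unfolding cmat_trace_def by (simp add: sum.distrib)

lemma trace_diff:
  "A \<in> carrier_mat n n \<Longrightarrow> B \<in> carrier_mat n n \<Longrightarrow> cmat_trace (A - B) = cmat_trace A - cmat_trace B"
  unfolding cmat_trace_def by (simp add: sum_subtractf)

lemma trace_mult_comm:
  assumes "A \<in> carrier_mat n k" "B \<in> carrier_mat k n"
  shows "cmat_trace (A * B) = cmat_trace (B * A)"
proof -
  have "cmat_trace (A * B) = (\<Sum>i<n. \<Sum>j<k. A $$ (i, j) * B $$ (j, i))"
    unfolding cmat_trace_def using assms by (simp add: scalar_prod_def atLeast0LessThan)
  also have "\<dots> = (\<Sum>j<k. \<Sum>i<n. B $$ (j, i) * A $$ (i, j))"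
    by (subst sum.swap) (simp add: mult.commute)
  also have "\<dots> = cmat_trace (B * A)"
    unfolding cmat_trace_def using assms by (simp add: scalar_prod_def atLeast0LessThan)
  finally show ?thesis .
qed

definition frobenius_norm_sq :: "nat \<Rightarrow> complex mat \<Rightarrow> real" where
  "frobenius_norm_sq n K = (\<Sum>i<n. \<Sum>j<n. (cmod (K $$ (i, j)))\<^sup>2)"

lemma frobenius_norm_sq_nonneg: "0 \<le> frobenius_norm_sq n K"
  unfolding frobenius_norm_sq_def by (intro sum_nonneg) simp

lemma trace_adjoint_mult_self:
  assumes K: "K \<in> carrier_mat n n"
  shows "cmat_trace (mat_adjoint K * K) = complex_of_real (frobenius_norm_sq n K)"
proof -
  have "cmat_trace (mat_adjoint K * K) = (\<Sum>i<n. \<Sum>j<n. cnj (K $$ (j, i)) * K $$ (j, i))"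
    unfolding cmat_trace_def using K by (simp add: scalar_prod_def atLeast0LessThan)
  also have "\<dots> = (\<Sum>i<n. \<Sum>j<n. complex_of_real ((cmod (K $$ (j, i)))\<^sup>2))"
    by (intro sum.cong refl) (metis complex_norm_square mult.commute)
  finally show ?thesis unfolding frobenius_norm_sq_def by (subst sum.swap) simp
qed

lemma frobenius_norm_sq_eq_0_imp_zero:
  assumes K: "K \<in> carrier_mat n n" and zero: "frobenius_norm_sq n K = 0"
  shows "K = 0\<^sub>m n n"
proof -
  have "\<forall>i<n. (\<Sum>j<n. (cmod (K $$ (i, j)))\<^sup>2) = 0"
    using zero unfolding frobenius_norm_sq_def
    by (subst (asm) sum_nonneg_eq_0_iff) (auto intro: sum_nonneg)
  then have "\<forall>i<n. \<forall>j<n. K $$ (i, j) = 0" by (auto simp: sum_nonneg_eq_0_iff)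
  then show ?thesis using K by (intro eq_matI) auto
qed

lemma delta2_delta2:
  assumes "x \<in> carrier_mat n n" "h \<in> carrier_mat n n"
  shows "delta2 x (delta2 x h) = x * (x * h - h * x) - (x * h - h * x) * x"
  unfolding delta2_def using assms by (intro eq_matI) (auto simp: carrier_matD)

lemma mat_minus_eq_0_imp_eq:
  fixes A B :: "complex mat"
  assumes "A \<in> carrier_mat n n" "B \<in> carrier_mat n n" "A - B = 0\<^sub>m n n"
  shows "A = B"
proof (rule eq_matI)
  fix i j assume "i < dim_row B" "j < dim_col B"
  with assms have "(A - B) $$ (i, j) = 0" by auto
  with assms(1,2) \<open>i < dim_row B\<close> \<open>j < dim_col B\<close> show "A $$ (i, j) = B $$ (i, j)" by auto
qed (use assms in auto)

text \<open>For Hermitian \<open>x\<close>, \<open>h\<close> the commutator \<open>K = [x, h]\<close> is skew-adjoint, and cyclicity of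
  the trace turns \<open>\<tau>(h [x, K])\<close> into \<open>\<tau>([h, x] K) = \<tau>(K\<^sup>* K)\<close>.\<close>

lemma trace_mult_double_commutator:
  assumes x: "hermitian_mat n x" and h: "hermitian_mat n h"
  defines "K \<equiv> x * h - h * x"
  shows "cmat_trace (h * (x * K - K * x)) = cmat_trace (mat_adjoint K * K)"
proof -
  have xc: "x \<in> carrier_mat n n" and hc: "h \<in> carrier_mat n n"
    and xa: "mat_adjoint x = x" and ha: "mat_adjoint h = h"
    using x h unfolding hermitian_mat_def by auto
  note assoc = assoc_mult_mat[of _ n n _ n _ n]
  have Kc: "K \<in> carrier_mat n n" unfolding K_def using xc hc by auto
  have adj_K: "mat_adjoint K = h * x - x * h"
    unfolding K_def using xc hc xa ha by (simp add: mat_adjoint_minus[of _ n n] mat_adjoint_mult[of _ n n])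
  have "h * (x * K - K * x) = h * (x * K) - h * (K * x)"
    using xc hc Kc by (intro mult_minus_distrib_mat[of _ n n]) auto
  also have "h * (x * K) = h * x * K" using xc hc Kc by (simp add: assoc)
  finally have "cmat_trace (h * (x * K - K * x)) = cmat_trace (h * x * K) - cmat_trace ((h * K) * x)"
    using xc hc Kc by (simp add: trace_diff[of _ n] assoc)
  also have "cmat_trace ((h * K) * x) = cmat_trace (x * (h * K))"
    using xc hc Kc by (intro trace_mult_comm[of _ n n]) auto
  also have "\<dots> = cmat_trace (x * h * K)" using xc hc Kc by (simp add: assoc)
  also have "cmat_trace (h * x * K) - cmat_trace (x * h * K) = cmat_trace ((h * x - x * h) * K)"
    using xc hc Kc by (simp add: trace_diff[of _ n] minus_mult_distrib_mat[of _ n n])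
  finally show ?thesis unfolding adj_K .
qed

lemma trace_mult_laplacian:
  assumes x: "hermitian_mat n x" and y: "hermitian_mat n y" and h: "hermitian_mat n h"
  defines "Kx \<equiv> x * h - h * x" and "Ky \<equiv> y * h - h * y"
  shows "cmat_trace (h * laplacian x y h) = cmat_trace (mat_adjoint Ky * Ky) + cmat_trace (mat_adjoint Kx * Kx)"
proof -
  have xc: "x \<in> carrier_mat n n" and yc: "y \<in> carrier_mat n n" and hc: "h \<in> carrier_mat n n"
    using x y h unfolding hermitian_mat_def by auto
  have Kxc: "Kx \<in> carrier_mat n n" and Kyc: "Ky \<in> carrier_mat n n"
    unfolding Kx_def Ky_def using xc yc hc by auto
  have "laplacian x y h = (y * Ky - Ky * y) + (x * Kx - Kx * x)"
    unfolding laplacian_def delta2_delta2[OF xc hc] unfolding delta1_def Kx_def Ky_def ..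
  moreover have "h * ((y * Ky - Ky * y) + (x * Kx - Kx * x)) = h * (y * Ky - Ky * y) + h * (x * Kx - Kx * x)"
    using hc Kyc Kxc yc xc by (intro mult_add_distrib_mat[of _ n n]) auto
  moreover have "h * (y * Ky - Ky * y) \<in> carrier_mat n n" "h * (x * Kx - Kx * x) \<in> carrier_mat n n"
    using hc Kyc Kxc yc xc by (auto intro!: mult_carrier_mat minus_carrier_mat)
  ultimately have "cmat_trace (h * laplacian x y h)
      = cmat_trace (h * (y * Ky - Ky * y)) + cmat_trace (h * (x * Kx - Kx * x))"
    by (simp add: trace_add[of _ n])
  also have "\<dots> = cmat_trace (mat_adjoint Ky * Ky) + cmat_trace (mat_adjoint Kx * Kx)"
    unfolding Kx_def Ky_def
    using trace_mult_double_commutator[OF y h] trace_mult_double_commutator[OF x h] by simp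
  finally show ?thesis .
qed

lemma laplacian_eq_0_imp_commute:
  assumes x: "hermitian_mat n x" and y: "hermitian_mat n y" and h: "hermitian_mat n h"
    and lap: "laplacian x y h = 0\<^sub>m n n"
  shows "x * h = h * x" and "y * h = h * y"
proof -
  have xc: "x \<in> carrier_mat n n" and yc: "y \<in> carrier_mat n n" and hc: "h \<in> carrier_mat n n"
    using x y h unfolding hermitian_mat_def by auto
  define Kx where "Kx = x * h - h * x"
  define Ky where "Ky = y * h - h * y"
  have Kxc: "Kx \<in> carrier_mat n n" and Kyc: "Ky \<in> carrier_mat n n"
    unfolding Kx_def Ky_def using xc yc hc by auto
  have "cmat_trace (h * laplacian x y h) = 0"
    unfolding lap cmat_trace_def using hc by simp
  then have "complex_of_real (frobenius_norm_sq n Ky + frobenius_norm_sq n Kx) = 0"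
    using trace_mult_laplacian[OF x y h, folded Kx_def Ky_def]
    unfolding trace_adjoint_mult_self[OF Kyc] trace_adjoint_mult_self[OF Kxc] by simp
  then have "frobenius_norm_sq n Ky + frobenius_norm_sq n Kx = 0"
    by (simp only: of_real_eq_0_iff)
  then have "Kx = 0\<^sub>m n n" and "Ky = 0\<^sub>m n n"
    using frobenius_norm_sq_eq_0_imp_zero[OF Kxc] frobenius_norm_sq_eq_0_imp_zero[OF Kyc]
      frobenius_norm_sq_nonneg[of n Kx] frobenius_norm_sq_nonneg[of n Ky] by auto
  then show "x * h = h * x" and "y * h = h * y"
    unfolding Kx_def Ky_def using xc yc hc mat_minus_eq_0_imp_eq[of _ n] by auto
qed

section \<open>The commutant of the clock and shift matrices\<close>

lemma root_of_unity_pow_ne_1: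
  fixes n m k :: nat
  assumes cop: "coprime m n" and k: "0 < k" "k < n"
  shows "exp (2 * pi * \<i> * of_nat m / of_nat n) ^ k \<noteq> 1"
proof
  assume pow: "exp (2 * pi * \<i> * of_nat m / of_nat n) ^ k = 1"
  define \<theta> where "\<theta> = 2 * pi * real m * real k / real n"
  have "of_nat k * (2 * pi * \<i> * of_nat m / of_nat n) = \<i> * complex_of_real \<theta>"
    unfolding \<theta>_def by simp
  then have "cis \<theta> = 1"
    using pow unfolding exp_of_nat_mult[symmetric] by (simp add: cis_conv_exp)
  then have "cos \<theta> = 1" using cis.sel(1)[of \<theta>] by simp
  then obtain N :: int where "\<theta> = real_of_int N * 2 * pi" using cos_one_2pi_int by blast
  then have "real m * real k = real_of_int N * real n" unfolding \<theta>_def using k by (simp add: field_simps)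
  then have "real_of_int (int m * int k) = real_of_int (N * int n)" by simp
  then have "int (m * k) = N * int n" by (simp only: of_int_eq_iff of_nat_mult)
  then have "int n dvd int (m * k)" by simp
  then have "n dvd m * k" by (simp only: int_dvd_int_iff)
  then have "n dvd k" using cop by (simp add: coprime_commute coprime_dvd_mult_right_iff)
  then show False using k by (auto dest: dvd_imp_le)
qed

lemma root_of_unity_pow_inj:
  fixes n m :: nat
  assumes cop: "coprime m n" and i: "i < n" and j: "j < n"
    and eq: "exp (2 * pi * \<i> * of_nat m / of_nat n) ^ i = exp (2 * pi * \<i> * of_nat m / of_nat n) ^ j"
  shows "i = j"
proof (rule ccontr)
  let ?q = "exp (2 * pi * \<i> * of_nat m / of_nat n)"
  have no_period: False if ab: "a < b" "b < n" "?q ^ a = ?q ^ b" for a b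
  proof -
    have "?q ^ b = ?q ^ a * ?q ^ (b - a)"
      using ab(1) by (simp flip: power_add)
    then have "?q ^ (b - a) = 1" using ab(3) by (simp add: exp_not_eq_zero)
    moreover have "b - a < n" using ab by linarith
    ultimately show False using root_of_unity_pow_ne_1[OF cop, of "b - a"] ab by simp
  qed
  assume "i \<noteq> j"
  then consider "i < j" | "j < i" by linarith
  then show False
    using no_period[of i j] no_period[of j i] i j eq by cases auto
qed

lemma commute_shift_diag_step:
  fixes h :: "complex mat"
  assumes h: "h \<in> carrier_mat n n" and comm: "h * shift_mat n = shift_mat n * h"
    and diag: "\<And>i j. i < n \<Longrightarrow> j < n \<Longrightarrow> i \<noteq> j \<Longrightarrow> h $$ (i, j) = 0" and i: "i < n"
  shows "h $$ (Suc i mod n, Suc i mod n) = h $$ (i, i)"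
proof -
  let ?j = "Suc i mod n"
  have j: "?j < n" using i by auto
  have v: "shift_mat n \<in> carrier_mat n n" unfolding shift_mat_def by auto
  have "(h * shift_mat n) $$ (i, ?j) = (\<Sum>k<n. h $$ (i, k) * shift_mat n $$ (k, ?j))"
    using i j h v by (simp add: scalar_prod_def atLeast0LessThan)
  also have "\<dots> = (\<Sum>k<n. if k = i then h $$ (i, i) else 0)"
    using i j by (intro sum.cong refl) (auto simp: diag shift_mat_def)
  finally have hv_entry: "(h * shift_mat n) $$ (i, ?j) = h $$ (i, i)" using i by simp
  have "(shift_mat n * h) $$ (i, ?j) = (\<Sum>k<n. shift_mat n $$ (i, k) * h $$ (k, ?j))"
    using i j h v by (simp add: scalar_prod_def atLeast0LessThan)
  also have "\<dots> = (\<Sum>k<n. if k = ?j then h $$ (?j, ?j) else 0)"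
    using i j by (intro sum.cong refl) (auto simp: diag shift_mat_def)
  finally have "(shift_mat n * h) $$ (i, ?j) = h $$ (?j, ?j)" using j by simp
  with hv_entry show ?thesis using comm by simp
qed

lemma commutant_clock_shift:
  fixes n m :: nat and h :: "complex mat"
  defines "q \<equiv> exp (2 * pi * \<i> * of_nat m / of_nat n)"
  assumes cop: "coprime m n" and h: "h \<in> carrier_mat n n"
    and comm_u: "h * clock_mat n q = clock_mat n q * h"
    and comm_v: "h * shift_mat n = shift_mat n * h"
  shows "h = h $$ (0, 0) \<cdot>\<^sub>m 1\<^sub>m n"
proof -
  have off_diag: "h $$ (i, j) = 0" if i: "i < n" and j: "j < n" and "i \<noteq> j" for i j
  proof -
    have "q ^ i \<noteq> q ^ j" using root_of_unity_pow_inj[OF cop i j] \<open>i \<noteq> j\<close> unfolding q_def by blast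
    then show ?thesis using intertwine_mat_diag_entry[OF h comm_u[unfolded clock_mat_def] i j] by simp
  qed
  have diag: "h $$ (i, i) = h $$ (0, 0)" if "i < n" for i
    using that
  proof (induction i)
    case (Suc i)
    then have "h $$ (Suc i mod n, Suc i mod n) = h $$ (i, i)"
      by (intro commute_shift_diag_step[OF h comm_v off_diag]) auto
    then show ?case using Suc by simp
  qed simp
  show ?thesis
  proof (rule eq_matI)
    fix i j assume "i < dim_row (h $$ (0, 0) \<cdot>\<^sub>m 1\<^sub>m n)" "j < dim_col (h $$ (0, 0) \<cdot>\<^sub>m 1\<^sub>m n)"
    then have i: "i < n" and j: "j < n" by auto
    show "h $$ (i, j) = (h $$ (0, 0) \<cdot>\<^sub>m 1\<^sub>m n) $$ (i, j)"
      using i j diag[OF i] off_diag[OF i j] by (cases "i = j") simp_all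
  qed (use h in auto)
qed

lemma mat_log_scalar_imp_scalar:
  assumes pos: "strictly_positive n c" and log_c: "mat_log n c = a \<cdot>\<^sub>m 1\<^sub>m n"
  shows "\<exists>r. c = complex_of_real r \<cdot>\<^sub>m 1\<^sub>m n"
proof -
  have "hermitian_mat n c" using pos unfolding strictly_positive_def by auto
  from funcalc_hermitian_eq[OF this, of "\<lambda>t. complex_of_real (ln t)"]
  obtain U d where U: "unitary_mat n U" and c_eq: "c = U * real_diag_mat n d * mat_adjoint U"
    and log_eq: "mat_log n c = U * real_diag_mat n (\<lambda>i. ln (d i)) * mat_adjoint U"
    unfolding mat_log_def by blast
  have Uc: "U \<in> carrier_mat n n" using U by (rule unitary_mat_carrier)
  have "real_diag_mat n (\<lambda>i. ln (d i)) = mat_adjoint U * mat_log n c * U"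
    unfolding log_eq using Uc
    by (simp add: assoc_mult_mat[of _ n n _ n _ n] mult_carrier_mat[of _ n n _ n]
        unitary_adjoint_mult_cancel[OF U, of _ n] unitary_adjoint_mult[OF U])
  also have "\<dots> = a \<cdot>\<^sub>m 1\<^sub>m n" unfolding log_c by (rule unitary_conj_smult_one(1)[OF U])
  finally have log_diag: "real_diag_mat n (\<lambda>i. ln (d i)) = a \<cdot>\<^sub>m 1\<^sub>m n" .
  have log_d: "complex_of_real (ln (d i)) = a" if "i < n" for i
    using arg_cong[OF log_diag, of "\<lambda>M. M $$ (i, i)"] that by (simp add: mat_diag_def)
  have d_const: "d i = d 0" if i: "i < n" for i
  proof -
    have "complex_of_real (ln (d i)) = complex_of_real (ln (d 0))" using log_d[of i] log_d[of 0] i by simp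
    then have "ln (d i) = ln (d 0)" by (simp only: of_real_eq_iff)
    moreover have "0 < d i" "0 < d 0" using i strictly_positive_eigenvalues_pos[OF pos U c_eq] by auto
    ultimately show ?thesis by simp
  qed
  have "real_diag_mat n d = complex_of_real (d 0) \<cdot>\<^sub>m 1\<^sub>m n"
  proof (rule eq_matI)
    fix i j assume "i < dim_row (complex_of_real (d 0) \<cdot>\<^sub>m 1\<^sub>m n)"
      "j < dim_col (complex_of_real (d 0) \<cdot>\<^sub>m 1\<^sub>m n)"
    then show "real_diag_mat n d $$ (i, j) = (complex_of_real (d 0) \<cdot>\<^sub>m 1\<^sub>m n) $$ (i, j)"
      using d_const[of i] by (auto simp: mat_diag_def)
  qed auto
  then show ?thesis unfolding c_eq using unitary_conj_smult_one(2)[OF U] by auto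
qed

theorem mainTheorem4:
  fixes n m :: nat and \<gamma> :: real and x y c :: "complex mat"
  assumes "n \<ge> 2" and "1 \<le> m" and "m < n" and "coprime m n"
    and "hermitian_mat n x" and "hermitian_mat n y"
    and "clock_mat n (exp (2 * pi * \<i> * of_nat m / of_nat n)) =
           funcalc n (\<lambda>t. exp (2 * pi * \<i> * complex_of_real t / of_nat n)) x"
    and "shift_mat n = funcalc n (\<lambda>t. exp (2 * pi * \<i> * complex_of_real t / of_nat n)) y"
    and "\<gamma> > 0"
    and "strictly_positive n c"
    and "laplacian x y (mat_log n c) = 0\<^sub>m n n"
    and "cmat_trace c = of_nat n * complex_of_real \<gamma>"
  shows "c = complex_of_real \<gamma> \<cdot>\<^sub>m 1\<^sub>m n"
proof -
  note cop = assms(4) and x = assms(5) and y = assms(6) and u = assms(7) and v = assms(8)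
    and pos = assms(10) and lap = assms(11) and trace = assms(12)
  define h where "h = mat_log n c"
  have h: "hermitian_mat n h"
    using pos unfolding h_def mat_log_def strictly_positive_def by (blast intro: hermitian_funcalc_real)
  then have hc: "h \<in> carrier_mat n n" unfolding hermitian_mat_def by simp
  have "x * h = h * x" "y * h = h * y"
    using laplacian_eq_0_imp_commute[OF x y h lap[folded h_def]] by auto
  then have "h * clock_mat n (exp (2 * pi * \<i> * of_nat m / of_nat n))
      = clock_mat n (exp (2 * pi * \<i> * of_nat m / of_nat n)) * h"
    and "h * shift_mat n = shift_mat n * h"
    unfolding u v by (auto intro: commute_funcalc[OF x hc] commute_funcalc[OF y hc])
  then have "mat_log n c = h $$ (0, 0) \<cdot>\<^sub>m 1\<^sub>m n"
    unfolding h_def[symmetric] by (rule commutant_clock_shift[OF cop hc])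
  then obtain r where c: "c = complex_of_real r \<cdot>\<^sub>m 1\<^sub>m n"
    using mat_log_scalar_imp_scalar[OF pos] by blast
  then have "of_nat n * complex_of_real r = of_nat n * complex_of_real \<gamma>"
    using trace unfolding cmat_trace_def by simp
  then show ?thesis using c assms(1) by simp
qed

end
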